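(* There exist a prime $p$, a field $\Bbbk$ of characteristic $p$, a polynomial ring $R=\Bbbk[x_1,\dots,x_n]$ and a $p$-Borel fixed monomial ideal $I\subseteq R$ with the following property: for every ordering $m_1,m_2,\dots,m_r$ of the minimal monomial generators of $I$ there is some $i$ with $2\le i\le r$ such that the mapping cone of the map induced by multiplication by $m_i$ from a minimal free resolution of $R/((m_1,\dots,m_{i-1}):m_i)$ to a minimal free resolution of $R/(m_1,\dots,m_{i-1})$ is not a minimal free resolution of $R/(m_1,\dots,m_i)$.
   Context: For primes $p$ and integers $s,t\ge0$ with base-$p$ expansions $s=\sum a_ip^i$, $t=\sum b_ip^i$ ($0\le a_i,b_i<p$), write $s\prec_p t$ if $a_i\le b_i$ for all $i$. A monomial ideal $I$ is $p$-Borel (fixed) if for every minimal generator $\mathbf m$ of $I$ and every $j$ with $x_j^t$ the highest power of $x_j$ dividing $\mathbf m$, the monomial $(x_i/x_j)^s\mathbf m$ lies in $I$ for all $i<j$ and all $s\prec_p t$. *)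

theory Defs
  imports Main "HOL-Library.Poly_Mapping" "HOL-Computational_Algebra.Primes"
begin

section \<open>Polynomial ring k[x_1,...,x_n] (variables indexed 0..n-1)\<close>

type_synonym monom = "nat \<Rightarrow>\<^sub>0 nat"
type_synonym 'k mpoly = "monom \<Rightarrow>\<^sub>0 'k"

definition X :: "monom \<Rightarrow> 'k::comm_ring_1 mpoly" where
  "X m = Poly_Mapping.single m 1"

definition monom_in :: "nat \<Rightarrow> monom \<Rightarrow> bool" where
  "monom_in n m \<longleftrightarrow> (\<forall>i\<in>Poly_Mapping.keys m. i < n)"

definition in_ring :: "nat \<Rightarrow> 'k::comm_ring_1 mpoly \<Rightarrow> bool" where
  "in_ring n f \<longleftrightarrow> (\<forall>m\<in>Poly_Mapping.keys f. monom_in n m)"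

definition mdeg :: "monom \<Rightarrow> nat" where
  "mdeg m = (\<Sum>i\<in>Poly_Mapping.keys m. Poly_Mapping.lookup m i)"

definition homogeneous :: "'k::comm_ring_1 mpoly \<Rightarrow> int \<Rightarrow> bool" where
  "homogeneous f e \<longleftrightarrow> (\<forall>m\<in>Poly_Mapping.keys f. int (mdeg m) = e)"

definition gen_ideal :: "nat \<Rightarrow> 'k::comm_ring_1 mpoly set \<Rightarrow> 'k mpoly set" where
  "gen_ideal n S = {f. \<exists>G c. finite G \<and> G \<subseteq> S \<and> (\<forall>g. in_ring n (c g)) \<and>
                         f = (\<Sum>g\<in>G. c g * g)}"

definition colon :: "nat \<Rightarrow> 'k::comm_ring_1 mpoly set \<Rightarrow> 'k mpoly \<Rightarrow> 'k mpoly set" where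
  "colon n J f = {g. in_ring n g \<and> g * f \<in> J}"

definition monomial_ideal :: "nat \<Rightarrow> 'k::comm_ring_1 mpoly set \<Rightarrow> bool" where
  "monomial_ideal n I \<longleftrightarrow> (\<exists>S. (\<forall>m\<in>S. monom_in n m) \<and> I = gen_ideal n (X ` S))"

definition mdvd :: "monom \<Rightarrow> monom \<Rightarrow> bool" where
  "mdvd a b \<longleftrightarrow> (\<forall>i. Poly_Mapping.lookup a i \<le> Poly_Mapping.lookup b i)"

definition mingens :: "'k::comm_ring_1 mpoly set \<Rightarrow> monom set" where
  "mingens I = {m. X m \<in> I \<and> (\<forall>m'. X m' \<in> I \<and> mdvd m' m \<longrightarrow> m' = m)}"

definition prec_p :: "nat \<Rightarrow> nat \<Rightarrow> nat \<Rightarrow> bool" where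
  "prec_p p s t \<longleftrightarrow> (\<forall>k. (s div p ^ k) mod p \<le> (t div p ^ k) mod p)"

text \<open>(x_i/x_j)^s * m (only used when s \<le> exponent of x_j in m).\<close>
definition shift_monom :: "nat \<Rightarrow> nat \<Rightarrow> nat \<Rightarrow> monom \<Rightarrow> monom" where
  "shift_monom i j s m = m + Poly_Mapping.single i s - Poly_Mapping.single j s"

definition p_Borel :: "nat \<Rightarrow> 'k::comm_ring_1 mpoly set \<Rightarrow> bool" where
  "p_Borel p I \<longleftrightarrow> (\<forall>m\<in>mingens I. \<forall>i j s. i < j \<longrightarrow> prec_p p s (Poly_Mapping.lookup m j) \<longrightarrow>
                      X (shift_monom i j s m) \<in> I)"

text \<open>A complex of finitely generated free R-modules is given by ranks b :: nat => nat
  (F_k = R^(b k)) and differential matrices d k : R^(b k) -> R^(b (k-1)), k >= 1,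
  with entries d k i j (i < b (k-1), j < b k).\<close>

type_synonym 'k mat = "nat \<Rightarrow> nat \<Rightarrow> 'k mpoly"

definition vecs :: "nat \<Rightarrow> nat \<Rightarrow> (nat \<Rightarrow> 'k::comm_ring_1 mpoly) set" where
  "vecs n r = {v. (\<forall>i. in_ring n (v i)) \<and> (\<forall>i\<ge>r. v i = 0)}"

definition mat_apply :: "'k::comm_ring_1 mat \<Rightarrow> nat \<Rightarrow> nat \<Rightarrow> (nat \<Rightarrow> 'k mpoly) \<Rightarrow> nat \<Rightarrow> 'k mpoly" where
  "mat_apply A rows cols v = (\<lambda>i. if i < rows then (\<Sum>j<cols. A i j * v j) else 0)"

definition free_res :: "nat \<Rightarrow> 'k::comm_ring_1 mpoly set \<Rightarrow> (nat \<Rightarrow> nat) \<Rightarrow> (nat \<Rightarrow> 'k mat) \<Rightarrow> bool" where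
  "free_res n J b d \<longleftrightarrow>
     b 0 = 1 \<and> (\<exists>L. \<forall>k>L. b k = 0) \<and>
     (\<forall>k\<ge>1. \<forall>i<b (k-1). \<forall>j<b k. in_ring n (d k i j)) \<and>
     J = {mat_apply (d 1) (b 0) (b 1) v 0 | v. v \<in> vecs n (b 1)} \<and>
     (\<forall>k\<ge>1. {v \<in> vecs n (b k). mat_apply (d k) (b (k-1)) (b k) v = (\<lambda>_. 0)} =
             mat_apply (d (Suc k)) (b k) (b (Suc k)) ` vecs n (b (Suc k)))"

definition graded_cx :: "(nat \<Rightarrow> nat) \<Rightarrow> (nat \<Rightarrow> 'k::comm_ring_1 mat) \<Rightarrow> bool" where
  "graded_cx b d \<longleftrightarrow> (\<exists>deg :: nat \<Rightarrow> nat \<Rightarrow> int.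
     \<forall>k\<ge>1. \<forall>i<b (k-1). \<forall>j<b k. homogeneous (d k i j) (deg k j - deg (k-1) i))"

text \<open>Minimal: all entries of the differentials lie in the homogeneous maximal ideal.\<close>
definition min_free_res :: "nat \<Rightarrow> 'k::comm_ring_1 mpoly set \<Rightarrow> (nat \<Rightarrow> nat) \<Rightarrow> (nat \<Rightarrow> 'k mat) \<Rightarrow> bool" where
  "min_free_res n J b d \<longleftrightarrow> free_res n J b d \<and> graded_cx b d \<and>
     (\<forall>k\<ge>1. \<forall>i<b (k-1). \<forall>j<b k. Poly_Mapping.lookup (d k i j) 0 = 0)"

text \<open>phi is a chain map F -> G (F = (bF,dF), G = (bG,dG)) lifting multiplication by f
  on F_0 = R -> G_0 = R (the comparison map induced by multiplication by f).\<close>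
definition lifts_mult :: "nat \<Rightarrow> 'k::comm_ring_1 mpoly \<Rightarrow> (nat \<Rightarrow> nat) \<Rightarrow> (nat \<Rightarrow> 'k mat) \<Rightarrow>
     (nat \<Rightarrow> nat) \<Rightarrow> (nat \<Rightarrow> 'k mat) \<Rightarrow> (nat \<Rightarrow> 'k mat) \<Rightarrow> bool" where
  "lifts_mult n f bF dF bG dG phi \<longleftrightarrow>
     phi 0 0 0 = f \<and>
     (\<forall>k. \<forall>i<bG k. \<forall>j<bF k. in_ring n (phi k i j)) \<and>
     (\<forall>k\<ge>1. \<forall>i<bG (k-1). \<forall>j<bF k.
        (\<Sum>l<bG k. dG k i l * phi k l j) = (\<Sum>l<bF (k-1). phi (k-1) i l * dF k l j))"

text \<open>Mapping cone of phi : F -> G: C_k = G_k \<oplus> F_(k-1); the first bG k basis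
  elements are those of G_k, the remaining ones those of F_(k-1).
  Differential: (g, f) |-> (dG g + phi f, - dF f).\<close>
definition cone_rank :: "(nat \<Rightarrow> nat) \<Rightarrow> (nat \<Rightarrow> nat) \<Rightarrow> nat \<Rightarrow> nat" where
  "cone_rank bF bG k = bG k + (if k = 0 then 0 else bF (k-1))"

definition cone_diff :: "(nat \<Rightarrow> nat) \<Rightarrow> (nat \<Rightarrow> 'k::comm_ring_1 mat) \<Rightarrow> (nat \<Rightarrow> nat) \<Rightarrow>
     (nat \<Rightarrow> 'k mat) \<Rightarrow> (nat \<Rightarrow> 'k mat) \<Rightarrow> nat \<Rightarrow> 'k mat" where
  "cone_diff bF dF bG dG phi k i j =
     (if i < bG (k-1) then
        (if j < bG k then dG k i j else phi (k-1) i (j - bG k))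
      else
        (if j < bG k then 0 else - dF (k-1) (i - bG (k-1)) (j - bG k)))"

end

theory Submission
  imports Defs
begin

text \<open>
  Let \<open>I\<close> be generated by the eight cubics of \<open>k[x,y,z]\<close> other than \<open>xyz\<close> and \<open>z\<^sup>3\<close>;
  no move \<open>(x\<^sub>i/x\<^sub>j)\<^sup>s\<close> with \<open>s \<prec>\<^sub>2 t\<close> leads from a generator to \<open>xyz\<close> or \<open>z\<^sup>3\<close>, so \<open>I\<close>
  is 2-Borel. In any ordering of the generators let \<open>f\<close> be the last one whose exponent
  vector is a permutation of \<open>(0,1,2)\<close>, and let \<open>J\<close> be generated by its predecessors, with
  minimal resolution \<open>G\<close>. Among these predecessors there are \<open>a, b\<close> with \<open>f | L = lcm(a,b)\<close>,
  with \<open>lcm(a,f)\<close> and \<open>lcm(b,f)\<close> proper divisors of \<open>L\<close>, and such that the generators of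
  \<open>J\<close> dividing \<open>L\<close> split into an \<open>a\<close>-side and a \<open>b\<close>-side, any two from different sides
  having lcm \<open>L\<close>. Then the Koszul syzygy \<open>\<kappa> = x\<^bsup>L-a\<^esup>e\<^sub>a - x\<^bsup>L-b\<^esup>e\<^sub>b\<close> is not the image of
  an element of \<open>m G\<^sub>2\<close> (\<open>m\<close> the maximal ideal): expanding a first syzygy along the
  generators, the coefficient of \<open>x\<^sup>L\<close> in the \<open>a\<close>-side part is \<open>1\<close> for \<open>\<kappa>\<close> and \<open>0\<close> on
  \<open>d\<^sub>2(m G\<^sub>2)\<close>. In the mapping cone \<open>C\<close> of multiplication by \<open>f\<close>, however, the syzygies of
  \<open>a\<close> and of \<open>b\<close> with \<open>f\<close> are boundaries, and multiplying them by \<open>x\<^bsup>L-lcm(a,f)\<^esup>\<close> and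
  \<open>x\<^bsup>L-lcm(b,f)\<^esup>\<close> exhibits \<open>\<kappa>\<close> as the boundary of an element of \<open>m C\<^sub>2\<close>. If \<open>C\<close> were
  minimal, every lift of \<open>\<kappa>\<close> to \<open>G\<^sub>2\<close> would then differ from that element by a boundary
  from \<open>C\<^sub>3\<close>, hence lie in \<open>m G\<^sub>2\<close>.
\<close>

lemma mdvd_refl [simp]: "mdvd m m"
  by (simp add: mdvd_def)

lemma mdvd_trans: "mdvd a b \<Longrightarrow> mdvd b c \<Longrightarrow> mdvd a c"
  unfolding mdvd_def using le_trans by blast

lemma mdvd_antisym: "mdvd a b \<Longrightarrow> mdvd b a \<Longrightarrow> a = b"
  unfolding mdvd_def by (intro poly_mapping_eqI) (meson antisym)

lemma mdvd_add_left [simp]: "mdvd m (m + q)"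
  by (simp add: mdvd_def lookup_add)

lemma mdvd_add_right [simp]: "mdvd m (q + m)"
  by (simp add: mdvd_def lookup_add)

lemma mdvd_diff_self [simp]: "mdvd (k - m) k"
  by (simp add: mdvd_def lookup_minus)

lemma add_diff_mdvd: "mdvd m k \<Longrightarrow> m + (k - m) = k"
  unfolding mdvd_def by (intro poly_mapping_eqI) (simp add: lookup_add lookup_minus)

lemma diff_diff_mdvd: "mdvd m k \<Longrightarrow> k - (k - m) = m"
  unfolding mdvd_def by (intro poly_mapping_eqI) (simp add: lookup_minus)

lemma diff_add_diff_mdvd: "mdvd a b \<Longrightarrow> mdvd b c \<Longrightarrow> (c - b) + (b - a) = c - a"
  unfolding mdvd_def by (intro poly_mapping_eqI) (simp add: lookup_add lookup_minus le_trans)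

definition mlcm :: "monom \<Rightarrow> monom \<Rightarrow> monom" where
  "mlcm a b = a + (b - a)"

lemma lookup_mlcm: "Poly_Mapping.lookup (mlcm a b) i = max (Poly_Mapping.lookup a i) (Poly_Mapping.lookup b i)"
  by (simp add: mlcm_def lookup_add lookup_minus)

lemma mdvd_mlcm1 [simp]: "mdvd a (mlcm a b)"
  and mdvd_mlcm2 [simp]: "mdvd b (mlcm a b)"
  by (simp_all add: mdvd_def lookup_mlcm)

lemma mlcm_least: "mdvd a m \<Longrightarrow> mdvd b m \<Longrightarrow> mdvd (mlcm a b) m"
  by (simp add: mdvd_def lookup_mlcm)

lemma monom_in_add: "monom_in n a \<Longrightarrow> monom_in n b \<Longrightarrow> monom_in n (a + b)"
  unfolding monom_in_def using keys_add[of a b] by blast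

lemma monom_in_diff: "monom_in n a \<Longrightarrow> monom_in n (a - b)"
  unfolding monom_in_def by (auto simp: in_keys_iff lookup_minus)

lemma monom_in_mlcm: "monom_in n a \<Longrightarrow> monom_in n b \<Longrightarrow> monom_in n (mlcm a b)"
  unfolding mlcm_def by (intro monom_in_add monom_in_diff)

lemma monom_in_mdvd: "mdvd a b \<Longrightarrow> monom_in n b \<Longrightarrow> monom_in n a"
  unfolding monom_in_def mdvd_def by (metis in_keys_iff le_zero_eq)

lemma lookup_X: "Poly_Mapping.lookup (X m :: 'k::comm_ring_1 mpoly) k = (if k = m then 1 else 0)"
  by (simp add: X_def lookup_single)

lemma X_mult: "(X a :: 'k::comm_ring_1 mpoly) * X b = X (a + b)"
  by (simp add: X_def mult_single)

lemma X_0 [simp]: "X 0 = 1"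
  by (simp add: X_def)

lemma X_inj: "(X a :: 'k::comm_ring_1 mpoly) = X b \<Longrightarrow> a = b"
  by (metis lookup_X zero_neq_one)

lemma lookup_X_mult:
  "Poly_Mapping.lookup (X m * (Q::'k::comm_ring_1 mpoly)) k =
     (if mdvd m k then Poly_Mapping.lookup Q (k - m) else 0)"
proof -
  have "Poly_Mapping.lookup (X m * Q) k = (\<Sum>q. Poly_Mapping.lookup Q q when k = m + q)"
  proof -
    have "\<And>l S. Poly_Mapping.lookup (X m :: 'k mpoly) l * S = (if l = m then S else 0)"
      by (simp add: lookup_X)
    then show ?thesis by (simp add: lookup_mult when_def)
  qed
  also have "\<dots> = (if mdvd m k then Poly_Mapping.lookup Q (k - m) else 0)"
  proof (cases "mdvd m k")
    case True
    then have "\<And>q. (k = m + q) = (q = k - m)"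
      by (metis add_diff_mdvd add_diff_cancel_left')
    with True show ?thesis by simp
  next
    case False
    then have "\<And>q. k \<noteq> m + q" by auto
    with False show ?thesis by simp
  qed
  finally show ?thesis .
qed

lemma lookup_X_mult_diff:
  "mdvd m k \<Longrightarrow> Poly_Mapping.lookup (X (k - m) * (Q::'k::comm_ring_1 mpoly)) k = Poly_Mapping.lookup Q m"
  by (simp add: lookup_X_mult diff_diff_mdvd)

lemma lookup_X_proper_diff_0:
  "mdvd m k \<Longrightarrow> m \<noteq> k \<Longrightarrow> Poly_Mapping.lookup (X (k - m) :: 'k::comm_ring_1 mpoly) 0 = 0"
  by (metis add.right_neutral add_diff_mdvd lookup_X)

lemma monom_add_eq_0_iff: "(l::monom) + r = 0 \<longleftrightarrow> l = 0 \<and> r = 0"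
  by (auto simp: poly_mapping_eq_iff fun_eq_iff lookup_add)

lemma lookup_mult_0:
  "Poly_Mapping.lookup ((p::'k::comm_ring_1 mpoly) * q) 0 = Poly_Mapping.lookup p 0 * Poly_Mapping.lookup q 0"
proof -
  have "\<And>l. Poly_Mapping.lookup p l * (\<Sum>r. Poly_Mapping.lookup q r when 0 = l + r)
      = (if l = 0 then Poly_Mapping.lookup p 0 * Poly_Mapping.lookup q 0 else 0)"
    by (simp add: monom_add_eq_0_iff eq_commute[of 0] when_def)
  then show ?thesis by (simp add: lookup_mult)
qed

lemma lookup_mult_constfree_eq_0:
  assumes "Poly_Mapping.lookup (g::'k::comm_ring_1 mpoly) 0 = 0"
    and "\<And>w. mdvd w L \<Longrightarrow> w \<noteq> L \<Longrightarrow> Poly_Mapping.lookup Q w = 0"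
  shows "Poly_Mapping.lookup (g * Q) L = 0"
proof -
  have "Poly_Mapping.lookup g l * (\<Sum>r. Poly_Mapping.lookup Q r when L = l + r) = 0" for l
  proof (cases "l = 0")
    case False
    then have "(\<lambda>r. Poly_Mapping.lookup Q r when L = l + r) = (\<lambda>_. 0)"
      using assms(2) by (auto simp: when_def fun_eq_iff)
    then show ?thesis
      by (simp only:) simp
  qed (simp add: assms(1))
  then show ?thesis by (simp add: lookup_mult)
qed

lemma in_ring_0 [simp]: "in_ring n 0"
  by (simp add: in_ring_def)

lemma in_ring_X: "monom_in n m \<Longrightarrow> in_ring n (X m :: 'k::comm_ring_1 mpoly)"
  by (simp add: in_ring_def X_def)

lemma in_ring_1 [simp]: "in_ring n (1 :: 'k::comm_ring_1 mpoly)"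
  by (metis X_0 in_ring_X empty_iff keys_zero monom_in_def)

lemma in_ring_add: "in_ring n f \<Longrightarrow> in_ring n g \<Longrightarrow> in_ring n (f + g)"
  unfolding in_ring_def using keys_add[of f g] by blast

lemma in_ring_uminus: "in_ring n (f::'k::comm_ring_1 mpoly) \<Longrightarrow> in_ring n (- f)"
  by (simp add: in_ring_def)

lemma in_ring_diff: "in_ring n (f::'k::comm_ring_1 mpoly) \<Longrightarrow> in_ring n g \<Longrightarrow> in_ring n (f - g)"
  using in_ring_add[of n f "- g"] in_ring_uminus[of n g] by simp

lemma in_ring_mult: "in_ring n (f::'k::comm_ring_1 mpoly) \<Longrightarrow> in_ring n g \<Longrightarrow> in_ring n (f * g)"
  unfolding in_ring_def using keys_mult[of f g] monom_in_add by blast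

lemma X_in_gen_ideal: "s \<in> S \<Longrightarrow> (X s :: 'k::comm_ring_1 mpoly) \<in> gen_ideal n (X ` S)"
  unfolding gen_ideal_def by (intro CollectI exI[of _ "{X s}"] exI[of _ "\<lambda>_. 1"]) simp

lemma X_in_gen_ideal_imp_mdvd:
  assumes "(X m :: 'k::comm_ring_1 mpoly) \<in> gen_ideal n (X ` S)"
  shows "\<exists>s\<in>S. mdvd s m"
proof -
  obtain G c where G: "G \<subseteq> (X ` S :: 'k mpoly set)" "(X m :: 'k mpoly) = (\<Sum>g\<in>G. c g * g)"
    using assms(1) unfolding gen_ideal_def by blast
  have "(\<Sum>g\<in>G. Poly_Mapping.lookup (c g * g) m) = Poly_Mapping.lookup (X m :: 'k mpoly) m"
    unfolding G(2) by (simp add: lookup_sum)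
  also have "\<dots> \<noteq> 0"
    by (simp add: lookup_X)
  finally obtain g where "g \<in> G" "Poly_Mapping.lookup (c g * g) m \<noteq> 0"
    by (rule sum.not_neutral_contains_not_neutral)
  with G(1) obtain s where "s \<in> S" "Poly_Mapping.lookup (X s * c g) m \<noteq> 0"
    by (auto simp: mult.commute)
  then show ?thesis
    unfolding lookup_X_mult by (auto split: if_splits)
qed

lemma gen_ideal_eq_sum_X:
  assumes "f \<in> gen_ideal n ((X :: monom \<Rightarrow> 'k::comm_ring_1 mpoly) ` P)" "finite P"
  shows "\<exists>q. f = (\<Sum>c\<in>P. q c * X c)"
proof -
  obtain G c where G: "G \<subseteq> X ` P" "f = (\<Sum>g\<in>G. c g * g)"
    using assms(1) unfolding gen_ideal_def by blast
  define P' where "P' = {p \<in> P. X p \<in> G}"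
  have "inj_on (X :: monom \<Rightarrow> 'k mpoly) P'"
    by (meson X_inj inj_onI)
  moreover have "X ` P' = G"
    using G(1) unfolding P'_def by blast
  ultimately have "f = (\<Sum>p\<in>P'. c (X p) * X p)"
    using G(2) sum.reindex[of X P' "\<lambda>g. c g * g"] by simp
  also have "\<dots> = (\<Sum>p\<in>P. if X p \<in> G then c (X p) * X p else 0)"
    unfolding P'_def using assms(2) by (simp add: sum.inter_filter)
  also have "\<dots> = (\<Sum>p\<in>P. (if X p \<in> G then c (X p) else 0) * X p)"
    by (rule sum.cong) auto
  finally show ?thesis
    by (rule exI[where x = "\<lambda>p. if X p \<in> G then c (X p) else 0"])
qed

lemma gen_ideal_row_eq_sum_X:
  fixes N :: nat
  assumes "\<And>l. l < N \<Longrightarrow> g l \<in> gen_ideal n ((X :: monom \<Rightarrow> 'k::comm_ring_1 mpoly) ` P)" "finite P"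
  shows "\<exists>Q. \<forall>u. (\<Sum>l<N. g l * u l) = (\<Sum>c\<in>P. X c * (\<Sum>l<N. Q l c * u l))"
proof -
  have "\<forall>l. \<exists>q. l < N \<longrightarrow> g l = (\<Sum>c\<in>P. q c * X c)"
    using gen_ideal_eq_sum_X assms by blast
  then obtain Q where Q: "\<And>l. l < N \<Longrightarrow> g l = (\<Sum>c\<in>P. Q l c * X c)"
    by (metis choice)
  show ?thesis
  proof (intro exI[of _ Q] allI)
    fix u :: "nat \<Rightarrow> 'k mpoly"
    have "(\<Sum>l<N. g l * u l) = (\<Sum>l<N. \<Sum>c\<in>P. X c * (Q l c * u l))"
    proof (intro sum.cong refl)
      fix l assume "l \<in> {..<N}"
      then have "g l * u l = (\<Sum>c\<in>P. Q l c * X c * u l)"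
        by (simp add: Q sum_distrib_right)
      then show "g l * u l = (\<Sum>c\<in>P. X c * (Q l c * u l))"
        by (simp add: mult_ac)
    qed
    also have "\<dots> = (\<Sum>c\<in>P. \<Sum>l<N. X c * (Q l c * u l))"
      by (rule sum.swap)
    also have "\<dots> = (\<Sum>c\<in>P. X c * (\<Sum>l<N. Q l c * u l))"
      by (simp add: sum_distrib_left)
    finally show "(\<Sum>l<N. g l * u l) = (\<Sum>c\<in>P. X c * (\<Sum>l<N. Q l c * u l))" .
  qed
qed

lemma mingens_gen_ideal_antichain:
  assumes "\<And>s t. s \<in> S \<Longrightarrow> t \<in> S \<Longrightarrow> mdvd s t \<Longrightarrow> s = t"
  shows "mingens (gen_ideal n ((X :: monom \<Rightarrow> 'k::comm_ring_1 mpoly) ` S)) = S"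
proof (intro equalityI subsetI)
  fix m assume "m \<in> mingens (gen_ideal n ((X :: monom \<Rightarrow> 'k mpoly) ` S))"
  then have "X m \<in> gen_ideal n ((X :: monom \<Rightarrow> 'k mpoly) ` S)"
    and min: "\<And>m'. X m' \<in> gen_ideal n ((X :: monom \<Rightarrow> 'k mpoly) ` S) \<Longrightarrow> mdvd m' m \<Longrightarrow> m' = m"
    by (auto simp: mingens_def)
  then obtain s where "s \<in> S" "mdvd s m"
    using X_in_gen_ideal_imp_mdvd by blast
  with min[OF X_in_gen_ideal] show "m \<in> S"
    by auto
next
  fix m assume "m \<in> S"
  moreover have "m' = m"
    if m': "X m' \<in> gen_ideal n ((X :: monom \<Rightarrow> 'k mpoly) ` S)" and "mdvd m' m" for m'
  proof -
    obtain s where "s \<in> S" "mdvd s m'"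
      using X_in_gen_ideal_imp_mdvd[OF m'] by blast
    with \<open>m \<in> S\<close> \<open>mdvd m' m\<close> assms have "s = m"
      using mdvd_trans by blast
    with \<open>mdvd s m'\<close> \<open>mdvd m' m\<close> show "m' = m"
      using mdvd_antisym by blast
  qed
  ultimately show "m \<in> mingens (gen_ideal n ((X :: monom \<Rightarrow> 'k mpoly) ` S))"
    by (auto simp: mingens_def X_in_gen_ideal)
qed

section \<open>Coefficients along separated generators\<close>

text \<open>
  \<open>lcm_separated P C L\<close> says that, in the graph on the generators in \<open>P\<close> dividing \<open>L\<close>
  joining two of them when their lcm properly divides \<open>L\<close>, no edge leaves \<open>C\<close>.
  This is the situation in which a Koszul syzygy of degree \<open>L\<close> between \<open>C\<close> and its
  complement is a minimal syzygy.
\<close>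

definition lcm_separated :: "monom set \<Rightarrow> monom set \<Rightarrow> monom \<Rightarrow> bool" where
  "lcm_separated P C L \<longleftrightarrow>
     (\<forall>c\<in>P \<inter> C. \<forall>d\<in>P - C. mdvd c L \<longrightarrow> mdvd d L \<longrightarrow> mlcm c d = L)"

lemma lcm_separatedD:
  assumes "lcm_separated P C L" "c \<in> P \<inter> C" "d \<in> P - C" "mdvd c w" "mdvd d w" "mdvd w L"
  shows "w = L"
proof -
  have "mlcm c d = L"
    using assms mdvd_trans[of _ w L] unfolding lcm_separated_def by blast
  then show ?thesis
    using assms(4-6) mlcm_least mdvd_antisym by metis
qed

lemma lcm_separated_subset: "lcm_separated P C L \<Longrightarrow> P' \<subseteq> P \<Longrightarrow> lcm_separated P' C L"
  unfolding lcm_separated_def by blast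

lemma lookup_sum_X_mult_separated:
  fixes S :: "monom \<Rightarrow> 'k::comm_ring_1 mpoly"
  assumes "finite P" "(\<Sum>c\<in>P. X c * S c) = 0" "lcm_separated P C L" "mdvd w L" "w \<noteq> L"
  shows "Poly_Mapping.lookup (\<Sum>c\<in>P \<inter> C. X c * S c) w = 0"
proof (cases "\<exists>d\<in>P - C. mdvd d w")
  case True
  then have "\<not> mdvd c w" if "c \<in> P \<inter> C" for c
    using that lcm_separatedD[OF assms(3)] assms(4,5) by blast
  then show ?thesis
    by (simp add: lookup_sum lookup_X_mult)
next
  case False
  then have "(\<Sum>c\<in>P \<inter> C. Poly_Mapping.lookup (X c * S c) w) = (\<Sum>c\<in>P. Poly_Mapping.lookup (X c * S c) w)"
    using assms(1) by (intro sum.mono_neutral_left) (auto simp: lookup_X_mult)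
  also have "\<dots> = 0"
    using assms(2) by (simp flip: lookup_sum)
  finally show ?thesis
    by (simp add: lookup_sum)
qed

lemma lookup_separated_sum_of_syzygies:
  fixes S :: "monom \<Rightarrow> nat \<Rightarrow> 'k::comm_ring_1 mpoly"
  assumes "finite P" "\<And>j. j < N \<Longrightarrow> (\<Sum>c\<in>P. X c * S c j) = 0"
    and "\<And>j. j < N \<Longrightarrow> Poly_Mapping.lookup (\<gamma> j) 0 = 0" "lcm_separated P C L"
  shows "Poly_Mapping.lookup (\<Sum>c\<in>P \<inter> C. X c * (\<Sum>j<N. \<gamma> j * S c j)) L = 0"
proof -
  have "(\<Sum>c\<in>P \<inter> C. X c * (\<Sum>j<N. \<gamma> j * S c j)) = (\<Sum>j<N. \<gamma> j * (\<Sum>c\<in>P \<inter> C. X c * S c j))"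
  proof -
    have "(\<Sum>c\<in>P \<inter> C. X c * (\<Sum>j<N. \<gamma> j * S c j)) = (\<Sum>c\<in>P \<inter> C. \<Sum>j<N. \<gamma> j * (X c * S c j))"
      by (simp add: sum_distrib_left mult.left_commute)
    also have "\<dots> = (\<Sum>j<N. \<Sum>c\<in>P \<inter> C. \<gamma> j * (X c * S c j))"
      by (rule sum.swap)
    finally show ?thesis
      by (simp add: sum_distrib_left)
  qed
  moreover have "Poly_Mapping.lookup (\<gamma> j * (\<Sum>c\<in>P \<inter> C. X c * S c j)) L = 0" if "j < N" for j
    using that assms by (intro lookup_mult_constfree_eq_0 lookup_sum_X_mult_separated) auto
  ultimately show ?thesis
    by (simp add: lookup_sum)
qed

lemma lookup_separated_sum_koszul:
  fixes A B :: "monom \<Rightarrow> 'k::comm_ring_1 mpoly"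
  assumes "finite P" "a \<in> P" "b \<in> P"
    and "\<And>c. c \<in> P \<Longrightarrow> mdvd c a \<Longrightarrow> c = a" "\<And>c. c \<in> P \<Longrightarrow> mdvd c b \<Longrightarrow> c = b"
    and "a \<in> C" "b \<notin> C" "mdvd a L" "mdvd b L"
    and "(\<Sum>c\<in>P. X c * A c) = X a" "(\<Sum>c\<in>P. X c * B c) = X b"
  shows "Poly_Mapping.lookup (\<Sum>c\<in>P \<inter> C. X c * (X (L - a) * A c - X (L - b) * B c)) L = 1"
proof -
  have coeff_a: "Poly_Mapping.lookup (X c * A c) a = (if c = a then Poly_Mapping.lookup (X a * A a) a else 0)"
    if "c \<in> P" for c
    using that assms(4) by (auto simp: lookup_X_mult)
  have coeff_b: "Poly_Mapping.lookup (X c * B c) b = 0" if "c \<in> P \<inter> C" for c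
    using that assms(5,7) by (auto simp: lookup_X_mult)
  have "(\<Sum>c\<in>P \<inter> C. Poly_Mapping.lookup (X c * A c) a) =
      (\<Sum>c\<in>P \<inter> C. if c = a then Poly_Mapping.lookup (X a * A a) a else 0)"
    using coeff_a by (intro sum.cong) auto
  also have "\<dots> = (\<Sum>c\<in>P. if c = a then Poly_Mapping.lookup (X a * A a) a else 0)"
    using assms(1,2,6) by simp
  also have "\<dots> = (\<Sum>c\<in>P. Poly_Mapping.lookup (X c * A c) a)"
    using coeff_a by (intro sum.cong) auto
  also have "\<dots> = 1"
    using assms(10) by (simp flip: lookup_sum add: lookup_X)
  finally have "(\<Sum>c\<in>P \<inter> C. Poly_Mapping.lookup (X c * A c) a) = 1" .
  moreover have "Poly_Mapping.lookup (X c * (X (L - a) * A c - X (L - b) * B c)) L =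
      Poly_Mapping.lookup (X c * A c) a - Poly_Mapping.lookup (X c * B c) b" for c
  proof -
    have "X c * (X (L - a) * A c - X (L - b) * B c) = X (L - a) * (X c * A c) - X (L - b) * (X c * B c)"
      by (simp add: algebra_simps)
    then show ?thesis
      using assms(8,9) by (simp add: lookup_minus lookup_X_mult_diff)
  qed
  ultimately show ?thesis
    using coeff_b by (simp add: lookup_sum sum_subtractf)
qed

section \<open>Free complexes and the mapping cone\<close>

definition unit_vec :: "nat \<Rightarrow> nat \<Rightarrow> 'k::comm_ring_1 mpoly" where
  "unit_vec l j = (if j = l then 1 else 0)"

lemma unit_vec_in_vecs: "l < N \<Longrightarrow> unit_vec l \<in> vecs n N"
  by (simp add: vecs_def unit_vec_def)

lemma mat_apply_unit_vec:
  "mat_apply A r c (unit_vec l) i = (if i < r \<and> l < c then A i l else 0)"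
proof -
  have "(\<Sum>j<c. A i j * unit_vec l j) = (\<Sum>j<c. if j = l then A i j else 0)"
    by (rule sum.cong) (simp_all add: unit_vec_def)
  then show ?thesis
    by (simp add: mat_apply_def)
qed

lemma mat_apply_lin:
  "mat_apply A r c (\<lambda>j. (p::'k::comm_ring_1 mpoly) * u j - q * v j) =
   (\<lambda>i. p * mat_apply A r c u i - q * mat_apply A r c v i)"
  unfolding mat_apply_def
  by (rule ext) (simp add: right_diff_distrib sum_subtractf sum_distrib_left mult.left_commute)

lemma mat_apply_diff:
  "mat_apply A r c (\<lambda>j. (u j::'k::comm_ring_1 mpoly) - v j) =
   (\<lambda>i. mat_apply A r c u i - mat_apply A r c v i)"
  by (simp add: fun_eq_iff mat_apply_def right_diff_distrib sum_subtractf)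

lemma lookup_mat_apply_0:
  assumes "\<And>i j. i < r \<Longrightarrow> j < c \<Longrightarrow> Poly_Mapping.lookup (A i j :: 'k::comm_ring_1 mpoly) 0 = 0"
  shows "Poly_Mapping.lookup (mat_apply A r c v i) 0 = 0"
  using assms by (simp add: mat_apply_def lookup_sum lookup_mult_0)

lemma vecs_mono: "v \<in> vecs n N \<Longrightarrow> N \<le> M \<Longrightarrow> v \<in> vecs n M"
  by (simp add: vecs_def)

lemma vecs_diff: "u \<in> vecs n N \<Longrightarrow> v \<in> vecs n N \<Longrightarrow> (\<lambda>j. u j - v j) \<in> vecs n N"
  by (simp add: vecs_def in_ring_diff)

lemma vecs_X_mult: "v \<in> vecs n N \<Longrightarrow> monom_in n m \<Longrightarrow> (\<lambda>j. X m * v j) \<in> vecs n N"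
  by (simp add: vecs_def in_ring_mult in_ring_X)

lemma free_res_rank_0: "free_res n J b d \<Longrightarrow> b 0 = 1"
  by (simp add: free_res_def)

lemma free_res_ideal:
  "free_res n J b d \<Longrightarrow> J = {(\<Sum>l<b 1. d 1 0 l * v l) | v. v \<in> vecs n (b 1)}"
  by (simp add: free_res_def mat_apply_def)

lemma free_res_exact:
  assumes "free_res n J b d" "1 \<le> k"
  shows "{v \<in> vecs n (b k). mat_apply (d k) (b (k - 1)) (b k) v = (\<lambda>_. 0)} =
           mat_apply (d (Suc k)) (b k) (b (Suc k)) ` vecs n (b (Suc k))"
  using assms by (simp add: free_res_def)

lemma free_res_cycle_is_boundary:
  assumes "free_res n J b d" "1 \<le> k" "v \<in> vecs n (b k)"
    and "mat_apply (d k) (b (k - 1)) (b k) v = (\<lambda>_. 0)"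
  obtains w where "w \<in> vecs n (b (Suc k))" "mat_apply (d (Suc k)) (b k) (b (Suc k)) w = v"
proof -
  have "v \<in> {v \<in> vecs n (b k). mat_apply (d k) (b (k - 1)) (b k) v = (\<lambda>_. 0)}"
    using assms(3,4) by simp
  then have "v \<in> mat_apply (d (Suc k)) (b k) (b (Suc k)) ` vecs n (b (Suc k))"
    unfolding free_res_exact[OF assms(1,2)] .
  then show ?thesis
    using that by blast
qed

lemma free_res_boundary_is_cycle:
  assumes "free_res n J b d" "1 \<le> k" "w \<in> vecs n (b (Suc k))"
  shows "mat_apply (d k) (b (k - 1)) (b k) (mat_apply (d (Suc k)) (b k) (b (Suc k)) w) = (\<lambda>_. 0)"
proof -
  have "mat_apply (d (Suc k)) (b k) (b (Suc k)) w \<in> mat_apply (d (Suc k)) (b k) (b (Suc k)) ` vecs n (b (Suc k))"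
    using assms(3) by (rule imageI)
  then show ?thesis
    unfolding free_res_exact[OF assms(1,2), symmetric] by simp
qed

lemma free_res_generator_preimage:
  assumes "free_res n (gen_ideal n ((X :: monom \<Rightarrow> 'k::comm_ring_1 mpoly) ` P)) b d" "c \<in> P"
  obtains v where "v \<in> vecs n (b 1)" "(\<Sum>l<b 1. d 1 0 l * v l) = X c"
proof -
  have "X c \<in> gen_ideal n ((X :: monom \<Rightarrow> 'k mpoly) ` P)"
    using assms(2) by (rule X_in_gen_ideal)
  then have "X c \<in> {(\<Sum>l<b 1. d 1 0 l * v l) | v. v \<in> vecs n (b 1)}"
    by (simp only: free_res_ideal[OF assms(1), symmetric])
  with that show ?thesis
    by force
qed

lemma free_res_first_diff_in_ideal:
  assumes "free_res n J b d" "l < b 1"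
  shows "d 1 0 l \<in> J"
proof -
  have "(\<Sum>j<b 1. d 1 0 j * unit_vec l j) = d 1 0 l"
    using mat_apply_unit_vec[of "d 1" 1 "b 1" l 0] assms(2) by (simp add: mat_apply_def)
  moreover have "unit_vec l \<in> vecs n (b 1)"
    using assms(2) by (rule unit_vec_in_vecs)
  ultimately show ?thesis
    by (subst free_res_ideal[OF assms(1)]) (intro CollectI exI[of _ "unit_vec l"], simp)
qed

lemma cone_rank_0 [simp]: "cone_rank bF bG 0 = bG 0"
  and cone_rank_Suc [simp]: "cone_rank bF bG (Suc k) = bG (Suc k) + bF k"
  by (simp_all add: cone_rank_def)

lemma mat_apply_cone_diff_base:
  assumes "\<And>j. j \<ge> bG (Suc k) \<Longrightarrow> \<gamma> j = 0"
  shows "mat_apply (cone_diff bF dF bG dG phi (Suc k)) (cone_rank bF bG k) (cone_rank bF bG (Suc k)) \<gamma> =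
         mat_apply (dG (Suc k)) (bG k) (bG (Suc k)) \<gamma>"
proof
  fix i
  have "(\<Sum>j<cone_rank bF bG (Suc k). cone_diff bF dF bG dG phi (Suc k) i j * \<gamma> j) =
        (\<Sum>j<bG (Suc k). cone_diff bF dF bG dG phi (Suc k) i j * \<gamma> j)"
    using assms by (intro sum.mono_neutral_right) auto
  also have "\<dots> = (if i < bG k then \<Sum>j<bG (Suc k). dG (Suc k) i j * \<gamma> j else 0)"
    by (simp add: cone_diff_def)
  finally have "(\<Sum>j<cone_rank bF bG (Suc k). cone_diff bF dF bG dG phi (Suc k) i j * \<gamma> j) =
      (if i < bG k then \<Sum>j<bG (Suc k). dG (Suc k) i j * \<gamma> j else 0)" .
  moreover have "bG k \<le> cone_rank bF bG k"
    by (cases k) simp_all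
  ultimately show "mat_apply (cone_diff bF dF bG dG phi (Suc k)) (cone_rank bF bG k) (cone_rank bF bG (Suc k)) \<gamma> i =
      mat_apply (dG (Suc k)) (bG k) (bG (Suc k)) \<gamma> i"
    by (simp add: mat_apply_def)
qed

lemma mat_apply_cone_diff_1:
  assumes "bG 0 = 1" "bF 0 = 1"
  shows "mat_apply (cone_diff bF dF bG dG phi 1) (cone_rank bF bG 0) (cone_rank bF bG 1) v =
         (\<lambda>i. if i = 0 then (\<Sum>l<bG 1. dG 1 0 l * v l) + phi 0 0 0 * v (bG 1) else 0)"
proof -
  have "(\<Sum>j<bG 1 + 1. cone_diff bF dF bG dG phi 1 0 j * v j) =
      (\<Sum>l<bG 1. dG 1 0 l * v l) + phi 0 0 0 * v (bG 1)"
    using assms by (simp add: cone_diff_def)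
  then show ?thesis
    using assms by (simp add: fun_eq_iff mat_apply_def)
qed

lemma free_res_columns_are_syzygies:
  assumes "free_res n J b d" "j < b 2"
  shows "(\<Sum>l<b 1. d 1 0 l * d 2 l j) = 0"
proof -
  have "unit_vec j \<in> vecs n (b (Suc 1))"
    using assms(2) by (simp add: unit_vec_in_vecs numeral_2_eq_2)
  from free_res_boundary_is_cycle[OF assms(1) _ this]
  have "mat_apply (d 1) (b 0) (b 1) (mat_apply (d 2) (b 1) (b 2) (unit_vec j)) 0 = 0"
    by (simp add: fun_eq_iff numeral_2_eq_2)
  moreover have "(\<Sum>l<b 1. d 1 0 l * mat_apply (d 2) (b 1) (b 2) (unit_vec j) l) = (\<Sum>l<b 1. d 1 0 l * d 2 l j)"
    using assms(2) by (intro sum.cong) (simp_all add: mat_apply_unit_vec)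
  ultimately show ?thesis
    using free_res_rank_0[OF assms(1)] by (simp add: mat_apply_def)
qed

lemma min_free_res_boundary_constfree:
  assumes "min_free_res n J b d" "1 \<le> k"
  shows "Poly_Mapping.lookup (mat_apply (d k) (b (k - 1)) (b k) w i) 0 = 0"
  using assms by (intro lookup_mat_apply_0) (auto simp: min_free_res_def)

section \<open>The mapping cone is not minimal\<close>

lemma cone_syzygy_is_boundary:
  fixes dF dG phi :: "nat \<Rightarrow> 'k::comm_ring_1 mat"
  assumes C: "free_res n I (cone_rank bF bG) (cone_diff bF dF bG dG phi)"
    and "bG 0 = 1" "bF 0 = 1" "phi 0 0 0 = X f"
    and \<alpha>: "\<alpha> \<in> vecs n (bG 1)" "(\<Sum>l<bG 1. dG 1 0 l * \<alpha> l) = X x"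
    and "mdvd x M" "mdvd f M" "monom_in n M"
  obtains \<tau> where "\<tau> \<in> vecs n (cone_rank bF bG 2)"
    "mat_apply (cone_diff bF dF bG dG phi 2) (cone_rank bF bG 1) (cone_rank bF bG 2) \<tau> =
       (\<lambda>j. X (M - x) * \<alpha> j - X (M - f) * unit_vec (bG 1) j)"
proof -
  define \<sigma> where "\<sigma> = (\<lambda>j. X (M - x) * \<alpha> j - X (M - f) * (unit_vec (bG 1) j :: 'k mpoly))"
  have \<sigma>_vec: "\<sigma> \<in> vecs n (cone_rank bF bG (Suc 0))"
    using \<alpha>(1) assms(3,9)
    by (auto simp: \<sigma>_def vecs_def unit_vec_def
        intro!: in_ring_diff in_ring_mult in_ring_uminus in_ring_X monom_in_diff)
  have "(\<Sum>l<bG 1. dG 1 0 l * \<sigma> l) = (\<Sum>l<bG 1. X (M - x) * (dG 1 0 l * \<alpha> l))"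
    by (rule sum.cong) (simp_all add: \<sigma>_def unit_vec_def mult.left_commute)
  then have "(\<Sum>l<bG 1. dG 1 0 l * \<sigma> l) = X (M - x) * X x"
    using \<alpha>(2) by (simp flip: sum_distrib_left)
  moreover have "\<sigma> (bG 1) = - X (M - f)"
    using \<alpha>(1) by (simp add: \<sigma>_def vecs_def unit_vec_def)
  ultimately have "(\<Sum>l<bG 1. dG 1 0 l * \<sigma> l) + X f * \<sigma> (bG 1) = 0"
    using assms(7,8) by (simp add: X_mult add.commute add_diff_mdvd)
  then have "mat_apply (cone_diff bF dF bG dG phi 1) (cone_rank bF bG 0) (cone_rank bF bG 1) \<sigma> = (\<lambda>_. 0)"
    unfolding mat_apply_cone_diff_1[where bG = bG and bF = bF, OF assms(2,3)] assms(4) by (simp add: fun_eq_iff)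
  with \<sigma>_vec obtain \<tau> where "\<tau> \<in> vecs n (cone_rank bF bG (Suc 1))"
      "mat_apply (cone_diff bF dF bG dG phi (Suc 1)) (cone_rank bF bG 1) (cone_rank bF bG (Suc 1)) \<tau> = \<sigma>"
    using free_res_cycle_is_boundary[OF C, of 1 \<sigma>] by auto
  then show ?thesis
    using that unfolding \<sigma>_def by (simp add: numeral_2_eq_2)
qed

lemma cone_koszul_syzygy_is_constfree_boundary:
  fixes dF dG phi :: "nat \<Rightarrow> 'k::comm_ring_1 mat"
  assumes C: "free_res n I (cone_rank bF bG) (cone_diff bF dF bG dG phi)"
    and "bG 0 = 1" "bF 0 = 1" "phi 0 0 0 = X f"
    and \<alpha>: "\<alpha> \<in> vecs n (bG 1)" "(\<Sum>l<bG 1. dG 1 0 l * \<alpha> l) = X a"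
    and \<beta>: "\<beta> \<in> vecs n (bG 1)" "(\<Sum>l<bG 1. dG 1 0 l * \<beta> l) = X b"
    and Ma: "mdvd a Ma" "mdvd f Ma" "mdvd Ma L" "Ma \<noteq> L"
    and Mb: "mdvd b Mb" "mdvd f Mb" "mdvd Mb L" "Mb \<noteq> L"
    and "monom_in n L"
  obtains \<tau> where "\<tau> \<in> vecs n (cone_rank bF bG 2)" "\<And>j. Poly_Mapping.lookup (\<tau> j) 0 = 0"
    "mat_apply (cone_diff bF dF bG dG phi 2) (cone_rank bF bG 1) (cone_rank bF bG 2) \<tau> =
       (\<lambda>j. X (L - a) * \<alpha> j - X (L - b) * \<beta> j)"
proof -
  obtain \<tau>a where \<tau>a: "\<tau>a \<in> vecs n (cone_rank bF bG 2)"
    "mat_apply (cone_diff bF dF bG dG phi 2) (cone_rank bF bG 1) (cone_rank bF bG 2) \<tau>a =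
       (\<lambda>j. X (Ma - a) * \<alpha> j - X (Ma - f) * unit_vec (bG 1) j)"
    using cone_syzygy_is_boundary[OF C assms(2-4) \<alpha> Ma(1,2) monom_in_mdvd[OF Ma(3) assms(17)]] .
  obtain \<tau>b where \<tau>b: "\<tau>b \<in> vecs n (cone_rank bF bG 2)"
    "mat_apply (cone_diff bF dF bG dG phi 2) (cone_rank bF bG 1) (cone_rank bF bG 2) \<tau>b =
       (\<lambda>j. X (Mb - b) * \<beta> j - X (Mb - f) * unit_vec (bG 1) j)"
    using cone_syzygy_is_boundary[OF C assms(2-4) \<beta> Mb(1,2) monom_in_mdvd[OF Mb(3) assms(17)]] .
  define \<tau> where "\<tau> = (\<lambda>j. X (L - Ma) * \<tau>a j - X (L - Mb) * \<tau>b j)"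
  show ?thesis
  proof
    show "\<tau> \<in> vecs n (cone_rank bF bG 2)"
      unfolding \<tau>_def using \<tau>a(1) \<tau>b(1) assms(17)
      by (intro vecs_diff vecs_X_mult monom_in_diff)
    show "Poly_Mapping.lookup (\<tau> j) 0 = 0" for j
      using Ma(3,4) Mb(3,4) by (simp add: \<tau>_def lookup_minus lookup_mult_0 lookup_X_proper_diff_0)
    have "X (L - M) * (X (M - c) * v - X (M - f) * e) = X (L - c) * v - X (L - f) * e"
      if "mdvd c M" "mdvd f M" "mdvd M L" for c M and v e :: "'k mpoly"
      using that by (simp add: right_diff_distrib X_mult diff_add_diff_mdvd flip: mult.assoc)
    then have "X (L - Ma) * (X (Ma - a) * \<alpha> j - X (Ma - f) * unit_vec (bG 1) j) -
          X (L - Mb) * (X (Mb - b) * \<beta> j - X (Mb - f) * unit_vec (bG 1) j) =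
          X (L - a) * \<alpha> j - X (L - b) * \<beta> j" for j
      using Ma(1-3) Mb(1-3) by simp
    then show "mat_apply (cone_diff bF dF bG dG phi 2) (cone_rank bF bG 1) (cone_rank bF bG 2) \<tau> =
        (\<lambda>j. X (L - a) * \<alpha> j - X (L - b) * \<beta> j)"
      unfolding \<tau>_def mat_apply_lin \<tau>a(2) \<tau>b(2) by simp
  qed
qed

lemma cone_boundary_in_base_is_cycle:
  fixes dF dG phi :: "nat \<Rightarrow> 'k::comm_ring_1 mat"
  assumes C: "free_res n I (cone_rank bF bG) (cone_diff bF dF bG dG phi)"
    and "bG 0 = 1" "bF 0 = 1" "\<kappa> \<in> vecs n (bG 1)" "\<tau> \<in> vecs n (cone_rank bF bG 2)"
    and "mat_apply (cone_diff bF dF bG dG phi 2) (cone_rank bF bG 1) (cone_rank bF bG 2) \<tau> = \<kappa>"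
  shows "mat_apply (dG 1) (bG 0) (bG 1) \<kappa> = (\<lambda>_. 0)"
proof -
  have "mat_apply (cone_diff bF dF bG dG phi 1) (cone_rank bF bG 0) (cone_rank bF bG 1) \<kappa> = (\<lambda>_. 0)"
    using free_res_boundary_is_cycle[OF C _ assms(5)[unfolded numeral_2_eq_2]] assms(6)
    by (simp add: numeral_2_eq_2)
  moreover have "mat_apply (cone_diff bF dF bG dG phi 1) (cone_rank bF bG 0) (cone_rank bF bG 1) \<kappa> 0 =
      (\<Sum>l<bG 1. dG 1 0 l * \<kappa> l) + phi 0 0 0 * \<kappa> (bG 1)"
    unfolding mat_apply_cone_diff_1[where bG = bG and bF = bF, OF assms(2,3)] by simp
  ultimately have "(\<Sum>l<bG 1. dG 1 0 l * \<kappa> l) = 0"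
    using assms(4) by (simp add: vecs_def)
  then show ?thesis
    using assms(2) by (simp add: fun_eq_iff mat_apply_def)
qed

lemma cone_boundary_lifts_to_base:
  fixes dF dG phi :: "nat \<Rightarrow> 'k::comm_ring_1 mat"
  assumes G: "free_res n J bG dG"
    and C: "min_free_res n I (cone_rank bF bG) (cone_diff bF dF bG dG phi)"
    and "bF 0 = 1" "\<kappa> \<in> vecs n (bG 1)"
    and \<tau>: "\<tau> \<in> vecs n (cone_rank bF bG 2)" "\<And>j. Poly_Mapping.lookup (\<tau> j) 0 = 0"
      "mat_apply (cone_diff bF dF bG dG phi 2) (cone_rank bF bG 1) (cone_rank bF bG 2) \<tau> = \<kappa>"
  obtains \<gamma> where "\<gamma> \<in> vecs n (bG 2)" "\<And>j. Poly_Mapping.lookup (\<gamma> j) 0 = 0"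
    "mat_apply (dG 2) (bG 1) (bG 2) \<gamma> = \<kappa>"
proof -
  have C': "free_res n I (cone_rank bF bG) (cone_diff bF dF bG dG phi)"
    using C by (simp add: min_free_res_def)
  have "mat_apply (dG 1) (bG 0) (bG 1) \<kappa> = (\<lambda>_. 0)"
    using cone_boundary_in_base_is_cycle[OF C' free_res_rank_0[OF G] assms(3,4) \<tau>(1,3)] .
  then obtain \<gamma> where \<gamma>: "\<gamma> \<in> vecs n (bG 2)" "mat_apply (dG 2) (bG 1) (bG 2) \<gamma> = \<kappa>"
    using free_res_cycle_is_boundary[OF G, of 1 \<kappa>] assms(4) by (auto simp: numeral_2_eq_2)
  define \<delta> where "\<delta> = (\<lambda>j. \<gamma> j - \<tau> j)"
  have "\<gamma> \<in> vecs n (cone_rank bF bG 2)"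
    using \<gamma>(1) by (rule vecs_mono) (simp add: numeral_2_eq_2)
  then have \<delta>_vec: "\<delta> \<in> vecs n (cone_rank bF bG 2)"
    unfolding \<delta>_def using \<tau>(1) by (rule vecs_diff)
  have "mat_apply (cone_diff bF dF bG dG phi 2) (cone_rank bF bG 1) (cone_rank bF bG 2) \<gamma> = \<kappa>"
    using mat_apply_cone_diff_base[of bG 1 \<gamma> bF dF dG phi] \<gamma> by (simp add: vecs_def numeral_2_eq_2)
  then have "mat_apply (cone_diff bF dF bG dG phi 2) (cone_rank bF bG 1) (cone_rank bF bG 2) \<delta> = (\<lambda>_. 0)"
    unfolding \<delta>_def mat_apply_diff \<tau>(3) by simp
  then obtain z where "\<delta> = mat_apply (cone_diff bF dF bG dG phi 3) (cone_rank bF bG 2) (cone_rank bF bG 3) z"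
    using free_res_cycle_is_boundary[OF C', of 2 \<delta>] \<delta>_vec by (auto simp: numeral_3_eq_3)
  then have "Poly_Mapping.lookup (\<delta> j) 0 = 0" for j
    using min_free_res_boundary_constfree[OF C, of 3] by simp
  then have "Poly_Mapping.lookup (\<gamma> j) 0 = 0" for j
    using \<tau>(2)[of j] by (simp add: \<delta>_def lookup_minus)
  with \<gamma> that show ?thesis
    by blast
qed

lemma koszul_syzygy_not_constfree_boundary:
  fixes d :: "nat \<Rightarrow> 'k::comm_ring_1 mat"
  assumes G: "free_res n (gen_ideal n (X ` P)) r d" and "finite P" "a \<in> P" "b \<in> P"
    and "\<And>c. c \<in> P \<Longrightarrow> mdvd c a \<Longrightarrow> c = a" "\<And>c. c \<in> P \<Longrightarrow> mdvd c b \<Longrightarrow> c = b"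
    and "a \<in> C" "b \<notin> C" "lcm_separated P C L" "mdvd a L" "mdvd b L"
    and \<alpha>: "(\<Sum>l<r 1. d 1 0 l * \<alpha> l) = X a" and \<beta>: "(\<Sum>l<r 1. d 1 0 l * \<beta> l) = X b"
    and \<gamma>: "\<And>j. Poly_Mapping.lookup (\<gamma> j) 0 = 0"
  shows "mat_apply (d 2) (r 1) (r 2) \<gamma> \<noteq> (\<lambda>l. X (L - a) * \<alpha> l - X (L - b) * \<beta> l)"
proof
  assume eq: "mat_apply (d 2) (r 1) (r 2) \<gamma> = (\<lambda>l. X (L - a) * \<alpha> l - X (L - b) * \<beta> l)"
  obtain Q where Q: "\<And>u. (\<Sum>l<r 1. d 1 0 l * u l) = (\<Sum>c\<in>P. X c * (\<Sum>l<r 1. Q l c * u l))"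
    using gen_ideal_row_eq_sum_X[where N = "r 1" and g = "\<lambda>l. d 1 0 l",
        OF free_res_first_diff_in_ideal[OF G] assms(2)] by blast
  define \<Lambda> where "\<Lambda> u = Poly_Mapping.lookup (\<Sum>c\<in>P \<inter> C. X c * (\<Sum>l<r 1. Q l c * u l)) L" for u
  have "\<Lambda> (mat_apply (d 2) (r 1) (r 2) \<gamma>) = 0"
  proof -
    have "(\<Sum>l<r 1. Q l c * mat_apply (d 2) (r 1) (r 2) \<gamma> l) =
        (\<Sum>j<r 2. \<gamma> j * (\<Sum>l<r 1. Q l c * d 2 l j))" for c
    proof -
      have "(\<Sum>l<r 1. Q l c * mat_apply (d 2) (r 1) (r 2) \<gamma> l) =
          (\<Sum>l<r 1. \<Sum>j<r 2. \<gamma> j * (Q l c * d 2 l j))"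
        by (simp add: mat_apply_def sum_distrib_left mult_ac)
      also have "\<dots> = (\<Sum>j<r 2. \<gamma> j * (\<Sum>l<r 1. Q l c * d 2 l j))"
        by (subst sum.swap) (simp add: sum_distrib_left)
      finally show ?thesis .
    qed
    moreover have "(\<Sum>c\<in>P. X c * (\<Sum>l<r 1. Q l c * d 2 l j)) = 0" if "j < r 2" for j
      using Q[of "\<lambda>l. d 2 l j"] free_res_columns_are_syzygies[OF G that] by simp
    ultimately show ?thesis
      unfolding \<Lambda>_def using assms(2,9) \<gamma> by (simp add: lookup_separated_sum_of_syzygies)
  qed
  moreover have "\<Lambda> (\<lambda>l. X (L - a) * \<alpha> l - X (L - b) * \<beta> l) = 1"
  proof -
    have "(\<Sum>l<r 1. Q l c * (X (L - a) * \<alpha> l - X (L - b) * \<beta> l)) =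
        X (L - a) * (\<Sum>l<r 1. Q l c * \<alpha> l) - X (L - b) * (\<Sum>l<r 1. Q l c * \<beta> l)" for c
      by (simp add: sum_distrib_left right_diff_distrib sum_subtractf mult.left_commute)
    then show ?thesis
      unfolding \<Lambda>_def using lookup_separated_sum_koszul[OF assms(2-8,10,11)] Q \<alpha> \<beta> by simp
  qed
  ultimately show False
    using eq by simp
qed

lemma mapping_cone_not_min_free_res:
  fixes dF dG phi :: "nat \<Rightarrow> 'k::comm_ring_1 mat"
  assumes F: "min_free_res n (colon n (gen_ideal n (X ` P)) (X f)) bF dF"
    and G: "min_free_res n (gen_ideal n (X ` P)) bG dG"
    and phi: "lifts_mult n (X f) bF dF bG dG phi"
    and "finite P" "a \<in> P" "b \<in> P"
    and "\<And>c. c \<in> P \<Longrightarrow> mdvd c a \<Longrightarrow> c = a" "\<And>c. c \<in> P \<Longrightarrow> mdvd c b \<Longrightarrow> c = b"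
    and "a \<in> C" "b \<notin> C" "lcm_separated P C (mlcm a b)"
    and "monom_in n a" "monom_in n b"
    and "mdvd f (mlcm a b)" "mlcm a f \<noteq> mlcm a b" "mlcm b f \<noteq> mlcm a b"
  shows "\<not> min_free_res n I (cone_rank bF bG) (cone_diff bF dF bG dG phi)"
proof
  assume C: "min_free_res n I (cone_rank bF bG) (cone_diff bF dF bG dG phi)"
  define L where "L = mlcm a b"
  have G': "free_res n (gen_ideal n (X ` P)) bG dG"
    using G by (simp add: min_free_res_def)
  have "bF 0 = 1" "phi 0 0 0 = X f"
    using F phi by (simp_all add: min_free_res_def free_res_def lifts_mult_def)
  obtain \<alpha> where \<alpha>: "\<alpha> \<in> vecs n (bG 1)" "(\<Sum>l<bG 1. dG 1 0 l * \<alpha> l) = X a"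
    by (rule free_res_generator_preimage[OF G' assms(5)])
  obtain \<beta> where \<beta>: "\<beta> \<in> vecs n (bG 1)" "(\<Sum>l<bG 1. dG 1 0 l * \<beta> l) = X b"
    by (rule free_res_generator_preimage[OF G' assms(6)])
  have C': "free_res n I (cone_rank bF bG) (cone_diff bF dF bG dG phi)"
    using C by (simp add: min_free_res_def)
  have L: "mdvd a L" "mdvd b L" "mdvd f L" "monom_in n L"
    using assms(12-14) by (simp_all add: L_def monom_in_mlcm)
  have Ma_ne_L: "mlcm a f \<noteq> L" and Mb_ne_L: "mlcm b f \<noteq> L"
    using assms(15,16) by (simp_all add: L_def)
  obtain \<tau> where \<tau>: "\<tau> \<in> vecs n (cone_rank bF bG 2)" "\<And>j. Poly_Mapping.lookup (\<tau> j) 0 = 0"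
    "mat_apply (cone_diff bF dF bG dG phi 2) (cone_rank bF bG 1) (cone_rank bF bG 2) \<tau> =
       (\<lambda>j. X (L - a) * \<alpha> j - X (L - b) * \<beta> j)"
    by (rule cone_koszul_syzygy_is_constfree_boundary[OF C' free_res_rank_0[OF G']
          \<open>bF 0 = 1\<close> \<open>phi 0 0 0 = X f\<close> \<alpha> \<beta> mdvd_mlcm1 mdvd_mlcm2 mlcm_least[OF L(1,3)] Ma_ne_L
          mdvd_mlcm1 mdvd_mlcm2 mlcm_least[OF L(2,3)] Mb_ne_L L(4)]) blast
  have \<kappa>: "(\<lambda>j. X (L - a) * \<alpha> j - X (L - b) * \<beta> j) \<in> vecs n (bG 1)"
    using \<alpha>(1) \<beta>(1) assms(12,13)
    by (intro vecs_diff vecs_X_mult monom_in_diff) (simp_all add: L_def monom_in_mlcm)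
  obtain \<gamma> where \<gamma>: "\<And>j. Poly_Mapping.lookup (\<gamma> j) 0 = 0"
      "mat_apply (dG 2) (bG 1) (bG 2) \<gamma> = (\<lambda>j. X (L - a) * \<alpha> j - X (L - b) * \<beta> j)"
    by (rule cone_boundary_lifts_to_base[OF G' C \<open>bF 0 = 1\<close> \<kappa> \<tau>]) blast
  have "mat_apply (dG 2) (bG 1) (bG 2) \<gamma> \<noteq> (\<lambda>j. X (L - a) * \<alpha> j - X (L - b) * \<beta> j)"
    by (rule koszul_syzygy_not_constfree_boundary[OF G' assms(4-10) assms(11)[folded L_def] L(1,2)
          \<alpha>(2) \<beta>(2) \<gamma>(1)])
  with \<gamma>(2) show False
    by contradiction
qed

section \<open>A 2-Borel ideal in three variables\<close>

lemma distinct_last_index_in_subset: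
  assumes "distinct ms" "T \<subseteq> set ms" "T \<noteq> {}"
  obtains i where "i < length ms" "ms ! i \<in> T" "T - {ms ! i} \<subseteq> set (take i ms)"
    "ms ! i \<notin> set (take i ms)"
proof -
  define K where "K = {k. k < length ms \<and> ms ! k \<in> T}"
  obtain t where "t \<in> T"
    using assms(3) by blast
  then obtain k where "k < length ms" "ms ! k \<in> T"
    using assms(2) by (metis in_set_conv_nth subsetD)
  then have "finite K" "K \<noteq> {}"
    by (auto simp: K_def)
  then have "Max K \<in> K" and max: "\<And>k. k \<in> K \<Longrightarrow> k \<le> Max K"
    by simp_all
  then have i: "Max K < length ms" "ms ! Max K \<in> T"
    by (simp_all add: K_def)
  moreover have "T - {ms ! Max K} \<subseteq> set (take (Max K) ms)"
  proof
    fix t assume t: "t \<in> T - {ms ! Max K}"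
    then obtain k where k: "k < length ms" "ms ! k = t"
      using assms(2) by (metis DiffD1 in_set_conv_nth subsetD)
    with t have "k \<in> K" "k \<noteq> Max K"
      by (auto simp: K_def)
    with max[of k] have "k < Max K"
      by simp
    with k show "t \<in> set (take (Max K) ms)"
      by (auto simp: in_set_conv_nth)
  qed
  moreover have "ms ! Max K \<notin> set (take (Max K) ms)"
    using assms(1) i(1) by (auto simp: in_set_conv_nth nth_eq_iff_index_eq)
  ultimately show ?thesis
    using that by blast
qed

lemma prec_p_le:
  assumes "2 \<le> p" "prec_p p s t"
  shows "s \<le> t"
  using assms(2)
proof (induction s arbitrary: t rule: less_induct)
  case (less s t)
  show ?case
  proof (cases "s = 0")
    case False
    have "prec_p p (s div p) (t div p)"
      unfolding prec_p_def
    proof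
      fix k
      have "(s div p ^ Suc k) mod p \<le> (t div p ^ Suc k) mod p"
        using less.prems unfolding prec_p_def by blast
      then show "(s div p div p ^ k) mod p \<le> (t div p div p ^ k) mod p"
        by (simp add: div_mult2_eq)
    qed
    then have "s div p \<le> t div p"
      using False assms(1) by (intro less.IH) simp_all
    moreover have "s mod p \<le> t mod p"
      using less.prems[unfolded prec_p_def, rule_format, of 0] by simp
    ultimately have "p * (s div p) + s mod p \<le> p * (t div p) + t mod p"
      by (intro add_mono mult_left_mono) simp_all
    then show ?thesis
      by simp
  qed simp
qed

definition mon :: "nat \<times> nat \<times> nat \<Rightarrow> monom" where
  "mon t = (case t of (a, b, c) \<Rightarrow>
     Poly_Mapping.single 0 a + Poly_Mapping.single 1 b + Poly_Mapping.single 2 c)"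

lemma lookup_mon:
  "Poly_Mapping.lookup (mon (a, b, c)) k = (if k = 0 then a else if k = 1 then b else if k = 2 then c else 0)"
  by (simp add: mon_def lookup_add lookup_single)

lemma mdvd_mon: "mdvd (mon (a, b, c)) (mon (a', b', c')) \<longleftrightarrow> a \<le> a' \<and> b \<le> b' \<and> c \<le> c'"
proof
  assume "mdvd (mon (a, b, c)) (mon (a', b', c'))"
  then have "Poly_Mapping.lookup (mon (a, b, c)) k \<le> Poly_Mapping.lookup (mon (a', b', c')) k" for k
    unfolding mdvd_def by blast
  from this[of 0] this[of 1] this[of 2] show "a \<le> a' \<and> b \<le> b' \<and> c \<le> c'"
    by (simp add: lookup_mon)
qed (simp add: mdvd_def lookup_mon)

lemma mon_eq_iff: "mon (a, b, c) = mon (a', b', c') \<longleftrightarrow> a = a' \<and> b = b' \<and> c = c'"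
  by (metis mdvd_antisym mdvd_mon order_antisym order_refl)

lemma inj_mon: "inj mon"
proof (rule injI)
  fix t t' :: "nat \<times> nat \<times> nat"
  show "mon t = mon t' \<Longrightarrow> t = t'"
    by (cases t; cases t') (simp add: mon_eq_iff)
qed

lemma mlcm_mon: "mlcm (mon (a, b, c)) (mon (a', b', c')) = mon (max a a', max b b', max c c')"
  by (rule poly_mapping_eqI) (simp add: lookup_mlcm lookup_mon)

lemma monom_in_mon: "monom_in 3 (mon t)"
  by (cases t) (auto simp: monom_in_def lookup_mon in_keys_iff split: if_splits)

definition example_exps :: "(nat \<times> nat \<times> nat) set" where
  "example_exps = {(3,0,0), (2,1,0), (2,0,1), (1,2,0), (1,0,2), (0,3,0), (0,2,1), (0,1,2)}"

definition mixed_exps :: "(nat \<times> nat \<times> nat) set" where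
  "mixed_exps = {(2,1,0), (2,0,1), (1,2,0), (1,0,2), (0,2,1), (0,1,2)}"

lemma mixed_exps_subset: "mixed_exps \<subseteq> example_exps"
  by (auto simp: mixed_exps_def example_exps_def)

lemma example_exps_antichain:
  "s \<in> mon ` example_exps \<Longrightarrow> t \<in> mon ` example_exps \<Longrightarrow> mdvd s t \<Longrightarrow> s = t"
  by (auto simp: example_exps_def mdvd_mon)

lemma mingens_example:
  "mingens (gen_ideal n ((X :: monom \<Rightarrow> 'k::comm_ring_1 mpoly) ` mon ` example_exps)) = mon ` example_exps"
  using example_exps_antichain by (rule mingens_gen_ideal_antichain)

lemma shift_monom_mon:
  assumes "i < 3" "j < 3" "s \<le> Poly_Mapping.lookup (mon (a, b, c)) j"
  shows "shift_monom i j s (mon (a, b, c)) =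
    mon (a + (if i = 0 then s else 0) - (if j = 0 then s else 0),
         b + (if i = 1 then s else 0) - (if j = 1 then s else 0),
         c + (if i = 2 then s else 0) - (if j = 2 then s else 0))"
  using assms
  by (intro poly_mapping_eqI) (auto simp: shift_monom_def lookup_minus lookup_add lookup_single lookup_mon)

lemma p_Borel_example:
  "p_Borel 2 (gen_ideal 3 ((X :: monom \<Rightarrow> 'k::comm_ring_1 mpoly) ` mon ` example_exps))"
  unfolding p_Borel_def mingens_example
proof (intro ballI allI impI)
  fix m i j s
  assume "m \<in> mon ` example_exps" "i < j" and prec: "prec_p 2 s (Poly_Mapping.lookup m j)"
  then obtain a b c where abc: "(a, b, c) \<in> example_exps" "m = mon (a, b, c)"
    by auto
  have s_le: "s \<le> Poly_Mapping.lookup m j"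
    using prec_p_le[OF _ prec] by simp
  have "\<not> prec_p 2 1 2"
    unfolding prec_p_def by (metis div_by_1 power_0 mod_self one_mod_two_eq_one zero_less_one not_le)
  then have not_1_2: "\<not> (s = 1 \<and> Poly_Mapping.lookup m j = 2)"
    using prec by auto
  show "X (shift_monom i j s m) \<in> gen_ideal 3 (X ` mon ` example_exps)"
  proof (cases "s = 0")
    case True
    then show ?thesis
      using abc by (simp add: shift_monom_def X_in_gen_ideal)
  next
    case False
    with s_le abc have "j < 3"
      by (auto simp: lookup_mon split: if_splits)
    with \<open>i < j\<close> have ij: "(i, j) \<in> {(0, 1), (0, 2), (1, 2)}"
      by auto
    have "s \<le> 3"
      using s_le abc by (auto simp: example_exps_def lookup_mon split: if_splits)
    with False have "s \<in> {1, 2, 3}"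
      by auto
    with ij abc s_le not_1_2 have "shift_monom i j s m \<in> mon ` example_exps"
      by (auto simp: shift_monom_mon lookup_mon example_exps_def mon_eq_iff)
    then show ?thesis
      by (rule X_in_gen_ideal)
  qed
qed

lemma lcm_separated_mon_image:
  "lcm_separated (mon ` A) (mon ` C) L \<longleftrightarrow>
     (\<forall>t\<in>A \<inter> C. \<forall>t'\<in>A - C. mdvd (mon t) L \<longrightarrow> mdvd (mon t') L \<longrightarrow> mlcm (mon t) (mon t') = L)"
  by (simp add: lcm_separated_def image_Int[OF inj_mon, symmetric] image_set_diff[OF inj_mon, symmetric])

lemma mixed_exps_witnesses:
  assumes "f \<in> mixed_exps"
  obtains a b C where "a \<in> mixed_exps - {f}" "b \<in> mixed_exps - {f}" "a \<in> C" "b \<notin> C"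
    "lcm_separated (mon ` (example_exps - {f})) (mon ` C) (mlcm (mon a) (mon b))"
    "mdvd (mon f) (mlcm (mon a) (mon b))"
    "mlcm (mon a) (mon f) \<noteq> mlcm (mon a) (mon b)" "mlcm (mon b) (mon f) \<noteq> mlcm (mon a) (mon b)"
proof -
  note exps_simps = mixed_exps_def example_exps_def mlcm_mon mdvd_mon mon_eq_iff
    insert_Diff_if
  from assms consider "f = (2,1,0)" | "f = (2,0,1)" | "f = (1,2,0)" | "f = (1,0,2)" | "f = (0,2,1)" | "f = (0,1,2)"
    by (auto simp: mixed_exps_def)
  then show ?thesis
  proof cases
    case 1
    show ?thesis
      by (rule that[of "(1,2,0)" "(2,0,1)" "{(0,2,1), (1,2,0)}"])
        (simp_all only: lcm_separated_mon_image, simp_all add: 1 exps_simps)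
  next
    case 2
    show ?thesis
      by (rule that[of "(1,0,2)" "(2,1,0)" "{(1,0,2), (0,1,2)}"])
        (simp_all only: lcm_separated_mon_image, simp_all add: 2 exps_simps)
  next
    case 3
    show ?thesis
      by (rule that[of "(0,2,1)" "(2,1,0)" "{(0,2,1)}"])
        (simp_all only: lcm_separated_mon_image, simp_all add: 3 exps_simps)
  next
    case 4
    show ?thesis
      by (rule that[of "(0,1,2)" "(2,0,1)" "{(0,1,2)}"])
        (simp_all only: lcm_separated_mon_image, simp_all add: 4 exps_simps)
  next
    case 5
    show ?thesis
      by (rule that[of "(0,1,2)" "(1,2,0)" "{(1,0,2), (0,1,2)}"])
        (simp_all only: lcm_separated_mon_image, simp_all add: 5 exps_simps)
  next
    case 6
    show ?thesis
      by (rule that[of "(0,2,1)" "(1,0,2)" "{(0,2,1), (1,2,0)}"])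
        (simp_all only: lcm_separated_mon_image, simp_all add: 6 exps_simps)
  qed
qed

lemma example_cone_not_min_free_res:
  assumes "f \<in> mixed_exps" "finite P" "mon ` (mixed_exps - {f}) \<subseteq> P" "P \<subseteq> mon ` (example_exps - {f})"
    and "min_free_res 3 (colon 3 (gen_ideal 3 ((X :: monom \<Rightarrow> 'k::comm_ring_1 mpoly) ` P)) (X (mon f))) bF dF"
    and "min_free_res 3 (gen_ideal 3 ((X :: monom \<Rightarrow> 'k mpoly) ` P)) bG dG"
    and "lifts_mult 3 (X (mon f) :: 'k mpoly) bF dF bG dG phi"
  shows "\<not> min_free_res 3 I (cone_rank bF bG) (cone_diff bF dF bG dG phi)"
proof -
  obtain a b C where abC: "a \<in> mixed_exps - {f}" "b \<in> mixed_exps - {f}" "a \<in> C" "b \<notin> C"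
    "lcm_separated (mon ` (example_exps - {f})) (mon ` C) (mlcm (mon a) (mon b))"
    "mdvd (mon f) (mlcm (mon a) (mon b))"
    "mlcm (mon a) (mon f) \<noteq> mlcm (mon a) (mon b)" "mlcm (mon b) (mon f) \<noteq> mlcm (mon a) (mon b)"
    using mixed_exps_witnesses[OF assms(1)] by blast
  have ab_P: "mon a \<in> P" "mon b \<in> P"
    using abC(1,2) assms(3) by auto
  have minimal: "c = mon t" if "c \<in> P" "mdvd c (mon t)" "t \<in> mixed_exps" for c t
    using that assms(4) mixed_exps_subset example_exps_antichain by blast
  show ?thesis
  proof (rule mapping_cone_not_min_free_res[OF assms(5-7) assms(2) ab_P _ _ _ _
        lcm_separated_subset[OF abC(5) assms(4)] monom_in_mon monom_in_mon abC(6-8)])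
    show "c = mon a" if "c \<in> P" "mdvd c (mon a)" for c
      using minimal[OF that] abC(1) by blast
    show "c = mon b" if "c \<in> P" "mdvd c (mon b)" for c
      using minimal[OF that] abC(2) by blast
    show "mon a \<in> mon ` C" "mon b \<notin> mon ` C"
      using abC(3,4) inj_mon by (auto simp: inj_image_mem_iff)
  qed
qed

lemma example_ordering_last_mixed:
  assumes "distinct ms" "set ms = mon ` example_exps"
  obtains i f where "i < length ms" "1 \<le> i" "f \<in> mixed_exps" "ms ! i = mon f"
    "mon ` (mixed_exps - {f}) \<subseteq> set (take i ms)" "set (take i ms) \<subseteq> mon ` (example_exps - {f})"
proof -
  have "mon ` mixed_exps \<subseteq> set ms" "mon ` mixed_exps \<noteq> {}"
    using assms(2) mixed_exps_subset by (auto simp: mixed_exps_def)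
  then obtain i where i: "i < length ms" "ms ! i \<in> mon ` mixed_exps"
      "mon ` mixed_exps - {ms ! i} \<subseteq> set (take i ms)" "ms ! i \<notin> set (take i ms)"
    using distinct_last_index_in_subset[OF assms(1)] by blast
  then obtain f where f: "f \<in> mixed_exps" "ms ! i = mon f"
    by blast
  have before: "mon ` (mixed_exps - {f}) \<subseteq> set (take i ms)"
    using i(3) f(2) inj_mon by (auto simp: inj_eq)
  have "mon ` (mixed_exps - {f}) \<noteq> {}"
    using f(1) by (auto simp: mixed_exps_def)
  with before have "1 \<le> i"
    by (cases i) auto
  moreover have "set (take i ms) \<subseteq> mon ` (example_exps - {f})"
    using i(4) f(2) assms(2) set_take_subset[of i ms] by auto
  ultimately show ?thesis
    using that i(1) f before by blast
qed

lemma example_ordering_has_nonminimal_cone: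
  fixes ms :: "monom list"
  assumes "distinct ms" "set ms = mon ` example_exps"
  shows "\<exists>i. 2 \<le> i \<and> i \<le> length ms \<and>
           (\<forall>bF dF bG dG phi.
              min_free_res 3 (colon 3 (gen_ideal 3 ((X :: monom \<Rightarrow> 'k::comm_ring_1 mpoly) ` set (take (i-1) ms))) (X (ms ! (i-1)))) bF dF \<and>
              min_free_res 3 (gen_ideal 3 ((X :: monom \<Rightarrow> 'k mpoly) ` set (take (i-1) ms))) bG dG \<and>
              lifts_mult 3 (X (ms ! (i-1)) :: 'k mpoly) bF dF bG dG phi \<longrightarrow>
              \<not> min_free_res 3 (gen_ideal 3 ((X :: monom \<Rightarrow> 'k mpoly) ` set (take i ms)))
                   (cone_rank bF bG) (cone_diff bF dF bG dG phi))"
proof -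
  obtain i f where i: "i < length ms" "1 \<le> i" "f \<in> mixed_exps" "ms ! i = mon f"
    "mon ` (mixed_exps - {f}) \<subseteq> set (take i ms)" "set (take i ms) \<subseteq> mon ` (example_exps - {f})"
    using example_ordering_last_mixed[OF assms] by blast
  then show ?thesis
    using example_cone_not_min_free_res[OF i(3) _ i(5,6), where 'k = 'k]
    by (intro exI[of _ "Suc i"]) simp
qed

theorem proposition5p2:
  assumes "CHAR('k::field) = 2"
  shows "\<exists>(p::nat) (n::nat) (I :: 'k mpoly set).
     prime p \<and> CHAR('k) = p \<and> monomial_ideal n I \<and> p_Borel p I \<and>
     (\<forall>ms. distinct ms \<and> set ms = mingens I \<longrightarrow>
        (\<exists>i. 2 \<le> i \<and> i \<le> length ms \<and>
           (\<forall>bF dF bG dG phi.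
              min_free_res n (colon n (gen_ideal n ((X :: monom \<Rightarrow> 'k mpoly) ` set (take (i-1) ms))) (X (ms ! (i-1)) :: 'k mpoly)) bF dF \<and>
              min_free_res n (gen_ideal n ((X :: monom \<Rightarrow> 'k mpoly) ` set (take (i-1) ms))) bG dG \<and>
              lifts_mult n (X (ms ! (i-1)) :: 'k mpoly) bF dF bG dG phi \<longrightarrow>
              \<not> min_free_res n (gen_ideal n ((X :: monom \<Rightarrow> 'k mpoly) ` set (take i ms)))
                   (cone_rank bF bG) (cone_diff bF dF bG dG phi))))"
proof -
  define I where "I = gen_ideal 3 ((X :: monom \<Rightarrow> 'k mpoly) ` mon ` example_exps)"
  have "monomial_ideal 3 I"
    unfolding monomial_ideal_def I_def by (intro exI[of _ "mon ` example_exps"]) (auto simp: monom_in_mon)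
  moreover have "p_Borel 2 I"
    unfolding I_def by (rule p_Borel_example)
  moreover have "mingens I = mon ` example_exps"
    unfolding I_def by (rule mingens_example)
  moreover have "prime (2::nat)"
    by simp
  ultimately show ?thesis
    using assms example_ordering_has_nonminimal_cone[where 'k = 'k]
    by (intro exI[of _ 2] exI[of _ 3] exI[of _ I]) simp
qed

end
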